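(* Let $n$ be a positive integer, $p$ a prime number, $I$ an infinite set, and $R=\prod_{i\in I}\mathbb Z/np^2\mathbb Z$. There exists a $3\times3$ matrix with entries in $R$ that is partition regular over $R$ but does not satisfy the generalised columns condition.
   Context: A $k\times l$ matrix $\mathbf A$ over $R$ is partition regular over $R$ if for every $r\ge1$ and every map $\chi\colon R\to\{1,\dots,r\}$ there is a nonzero $\mathbf x\in R^l$ with $\mathbf A\mathbf x=0$ and all entries of $\mathbf x$ of the same colour. With columns $\mathbf c_1,\dots,\mathbf c_l$, $\mathbf A$ satisfies the generalised columns condition if there exist $m\ge0$, a partition $\{1,\dots,l\}=I_0\cup\dots\cup I_m$ and $d_0,\dots,d_m\in R\setminus\{0\}$ with (i) $d_0\sum_{i\in I_0}\mathbf c_i=0$; (ii) for $1\le t\le m$, $d_t\sum_{i\in I_t}\mathbf c_i$ lies in the $R$-submodule generated by the $\mathbf c_j$ with $j\in I_0\cup\dots\cup I_{t-1}$; (iii) if $m>0$, the ideal $d_0(d_1\cdots d_m)^nR$ is infinite for every $n\ge0$. *)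

theory Defs
  imports "HOL-Computational_Algebra.Primes" "HOL-Algebra.Ring"
begin

text \<open>A k x l matrix over a ring R is represented as a function
  A :: nat => nat => 'a, with relevant entries A i j for i < k, j < l.
  Vectors in R^l are functions nat => 'a, relevant at indices j < l.\<close>

definition matrix_over :: "('a, 'b) ring_scheme \<Rightarrow> nat \<Rightarrow> nat \<Rightarrow> (nat \<Rightarrow> nat \<Rightarrow> 'a) \<Rightarrow> bool" where
  "matrix_over R k l A \<longleftrightarrow> (\<forall>i<k. \<forall>j<l. A i j \<in> carrier R)"

definition partition_regular :: "('a, 'b) ring_scheme \<Rightarrow> nat \<Rightarrow> nat \<Rightarrow> (nat \<Rightarrow> nat \<Rightarrow> 'a) \<Rightarrow> bool" where
  "partition_regular R k l A \<longleftrightarrow>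
    (\<forall>r::nat. r \<ge> 1 \<longrightarrow> (\<forall>\<chi>. \<chi> \<in> carrier R \<rightarrow> {1..r} \<longrightarrow>
      (\<exists>x. (\<forall>j<l. x j \<in> carrier R) \<and> (\<exists>j<l. x j \<noteq> \<zero>\<^bsub>R\<^esub>) \<and>
           (\<forall>i<k. (\<Oplus>\<^bsub>R\<^esub>j\<in>{..<l}. A i j \<otimes>\<^bsub>R\<^esub> x j) = \<zero>\<^bsub>R\<^esub>) \<and>
           (\<exists>c. \<forall>j<l. \<chi> (x j) = c))))"

text \<open>Generalised columns condition. Columns are indexed by j < l (0-based);
  the partition I_0, ..., I_m into nonempty blocks is given by a block map
  blk with I_t = {j < l. blk j = t}.\<close>
definition generalised_columns_condition :: "('a, 'b) ring_scheme \<Rightarrow> nat \<Rightarrow> nat \<Rightarrow> (nat \<Rightarrow> nat \<Rightarrow> 'a) \<Rightarrow> bool" where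
  "generalised_columns_condition R k l A \<longleftrightarrow>
    (\<exists>(m::nat) (blk::nat \<Rightarrow> nat) (d::nat \<Rightarrow> 'a).
       (\<forall>j<l. blk j \<le> m) \<and>
       (\<forall>t\<le>m. \<exists>j<l. blk j = t) \<and>
       (\<forall>t\<le>m. d t \<in> carrier R - {\<zero>\<^bsub>R\<^esub>}) \<and>
       (\<forall>i<k. d 0 \<otimes>\<^bsub>R\<^esub> (\<Oplus>\<^bsub>R\<^esub>j\<in>{j. j < l \<and> blk j = 0}. A i j) = \<zero>\<^bsub>R\<^esub>) \<and>
       (\<forall>t. 1 \<le> t \<and> t \<le> m \<longrightarrow>
          (\<exists>a. (\<forall>j. j < l \<and> blk j < t \<longrightarrow> a j \<in> carrier R) \<and>
               (\<forall>i<k. d t \<otimes>\<^bsub>R\<^esub> (\<Oplus>\<^bsub>R\<^esub>j\<in>{j. j < l \<and> blk j = t}. A i j)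
                     = (\<Oplus>\<^bsub>R\<^esub>j\<in>{j. j < l \<and> blk j < t}. a j \<otimes>\<^bsub>R\<^esub> A i j)))) \<and>
       (m > 0 \<longrightarrow> (\<forall>n::nat. infinite
          {d 0 \<otimes>\<^bsub>R\<^esub> ((\<Otimes>\<^bsub>R\<^esub>t\<in>{1..m}. d t) [^]\<^bsub>R\<^esub> n) \<otimes>\<^bsub>R\<^esub> y | y. y \<in> carrier R})))"

text \<open>The ring prod_{i in I} Z/qZ, elements being functions I -> {0..<q}
  (extended by 0 outside I), with componentwise arithmetic mod q.\<close>
definition prod_zmod :: "'i set \<Rightarrow> int \<Rightarrow> ('i \<Rightarrow> int) ring" where
  "prod_zmod I q =
    \<lparr>carrier = {f. (\<forall>i\<in>I. f i \<in> {0..<q}) \<and> (\<forall>i. i \<notin> I \<longrightarrow> f i = 0)},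
     mult = (\<lambda>f g i. if i \<in> I then (f i * g i) mod q else 0),
     one = (\<lambda>i. if i \<in> I then 1 mod q else 0),
     zero = (\<lambda>i. 0),
     add = (\<lambda>f g i. if i \<in> I then (f i + g i) mod q else 0)\<rparr>"

end

theory Submission
  imports Defs "HOL-Library.Ramsey"
begin

text \<open>
  Let \<open>q = N P\<^sup>2\<close> and \<open>R = \<Prod>\<^sub>i\<^sub>\<in>\<^sub>I \<int>/q\<int>\<close>; the matrix encodes the system
  \<open>P x = 0, P y = 0, x + y = z\<close>.

  Partition regularity: the elements \<open>N P \<one>\<^sub>A\<close> for finite \<open>A \<subseteq> I\<close> are killed by \<open>P\<close> and add
  like indicator functions on disjoint sets, so it suffices to find disjoint nonempty \<open>A\<close>, \<open>B\<close>
  such that \<open>A\<close>, \<open>B\<close>, \<open>A \<union> B\<close> get the same colour. Ramsey's theorem for pairs, applied to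
  intervals of an enumeration of a countable part of \<open>I\<close>, provides them.

  Failure of the columns condition: the last row has unit entries, so \<open>d\<^sub>0 \<noteq> 0\<close> forces the
  first block to consist of exactly two columns, and the first two rows then give
  \<open>d\<^sub>0 \<in> N P R\<close>. The remaining column is the only other block, and the same rows give
  \<open>d\<^sub>1 \<in> N P R\<close>. Hence \<open>d\<^sub>0 d\<^sub>1 \<in> N\<^sup>2 P\<^sup>2 R = 0\<close>, and the ideal of condition (iii)
  is finite.
\<close>

lemma finite_union_Schur:
  fixes c :: "'a set \<Rightarrow> nat"
  assumes "infinite I" and "\<And>A. A \<subseteq> I \<Longrightarrow> finite A \<Longrightarrow> c A < r"
  obtains A B where "A \<subseteq> I" "B \<subseteq> I" "finite A" "finite B" "A \<noteq> {}" "B \<noteq> {}" "A \<inter> B = {}"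
    "c A = c (A \<union> B)" "c B = c (A \<union> B)"
proof -
  obtain e :: "nat \<Rightarrow> 'a" where e: "inj e" "range e \<subseteq> I"
    using infinite_countable_subset[OF assms(1)] by blast
  \<comment> \<open>Colour the pair \<open>{a < b}\<close> by the colour of \<open>e ` {a..<b}\<close>; a monochromatic triple
      \<open>i < j < k\<close> yields the intervals \<open>[i, j)\<close>, \<open>[j, k)\<close> and their union \<open>[i, k)\<close>.\<close>
  define interval_colour where "interval_colour X = c (e ` {Min X..<Max X})" for X
  have "\<forall>x\<in>UNIV. \<forall>y\<in>UNIV. x \<noteq> y \<longrightarrow> interval_colour {x, y} < r"
    using e(2) by (auto simp: interval_colour_def intro!: assms(2))
  from Ramsey2[OF infinite_UNIV_nat this] obtain Y t
    where Y: "infinite Y" and Yt: "\<forall>x\<in>Y. \<forall>y\<in>Y. x \<noteq> y \<longrightarrow> interval_colour {x, y} = t"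
    by blast
  obtain i where "i \<in> Y"
    using Y by (metis finite.emptyI ex_in_conv)
  then obtain j k where ijk: "i \<in> Y" "j \<in> Y" "k \<in> Y" "i < j" "j < k"
    using Y unfolding infinite_nat_iff_unbounded by (meson less_trans)
  have colour: "c (e ` {a..<b}) = t" if "a \<in> Y" "b \<in> Y" "a < b" for a b
    using Yt[rule_format, of a b] that by (simp add: interval_colour_def)
  have union: "e ` {i..<j} \<union> e ` {j..<k} = e ` {i..<k}"
    using ijk by (auto simp flip: image_Un intro!: arg_cong[where f = "image e"])
  show thesis
  proof (rule that[of "e ` {i..<j}" "e ` {j..<k}"])
    show "e ` {i..<j} \<inter> e ` {j..<k} = {}"
      using e(1) by (auto dest: injD)
  qed (use e ijk colour union in auto)
qed

lemma block_map_two_blocks: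
  fixes blk :: "nat \<Rightarrow> nat"
  assumes "\<forall>j<l. blk j \<le> m" "\<forall>t\<le>m. \<exists>j<l. blk j = t"
    and "js < l" "{j. j < l \<and> blk j = 0} = {..<l} - {js}"
  shows "m = 1" "{j. j < l \<and> blk j = 1} = {js}"
proof -
  have others: "blk j = 0" if "j < l" "j \<noteq> js" for j
    using that assms(4) by blast
  have "blk js \<noteq> 0" "blk js \<le> m"
    using assms(1,3,4) by auto
  have only_js: "j = js" if "j < l" "blk j = t" "1 \<le> t" for j t
    using others that by fastforce
  have "1 \<le> m"
    using \<open>blk js \<noteq> 0\<close> \<open>blk js \<le> m\<close> by linarith
  then obtain j1 jm where "j1 < l" "blk j1 = 1" "jm < l" "blk jm = m"
    using assms(2) by blast
  with only_js[of j1 1] only_js[of jm m] \<open>1 \<le> m\<close> have "j1 = js" "jm = js"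
    by auto
  with \<open>blk j1 = 1\<close> \<open>blk jm = m\<close> show "m = 1"
    by simp
  have "blk j \<noteq> 1" if "j < l" "j \<noteq> js" for j
    using others[OF that] by simp
  with \<open>blk j1 = 1\<close> \<open>j1 = js\<close> show "{j. j < l \<and> blk j = 1} = {js}"
    using assms(3) by blast
qed

definition prod_zmod_const :: "'i set \<Rightarrow> int \<Rightarrow> int \<Rightarrow> 'i \<Rightarrow> int" where
  "prod_zmod_const I q c = (\<lambda>i. if i \<in> I then c mod q else 0)"

lemma prod_zmod_carrier_iff:
  "f \<in> carrier (prod_zmod I q) \<longleftrightarrow> (\<forall>i\<in>I. 0 \<le> f i \<and> f i < q) \<and> (\<forall>i. i \<notin> I \<longrightarrow> f i = 0)"
  by (auto simp: prod_zmod_def)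

lemma prod_zmod_simps:
  "x \<otimes>\<^bsub>prod_zmod I q\<^esub> y = (\<lambda>i. if i \<in> I then (x i * y i) mod q else 0)"
  "x \<oplus>\<^bsub>prod_zmod I q\<^esub> y = (\<lambda>i. if i \<in> I then (x i + y i) mod q else 0)"
  "\<zero>\<^bsub>prod_zmod I q\<^esub> = (\<lambda>i. 0)"
  "\<one>\<^bsub>prod_zmod I q\<^esub> = (\<lambda>i. if i \<in> I then 1 mod q else 0)"
  by (simp_all add: prod_zmod_def)

lemma prod_zmod_eqI:
  assumes "f \<in> carrier (prod_zmod I q)" "g \<in> carrier (prod_zmod I q)" "\<And>i. i \<in> I \<Longrightarrow> f i = g i"
  shows "f = g"
proof
  fix i show "f i = g i"
    using assms by (cases "i \<in> I") (auto simp: prod_zmod_carrier_iff)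
qed

lemma prod_zmod_mult_closed: "q > 0 \<Longrightarrow> x \<otimes>\<^bsub>prod_zmod I q\<^esub> y \<in> carrier (prod_zmod I q)"
  by (simp add: prod_zmod_carrier_iff prod_zmod_simps)

lemma prod_zmod_const_closed: "q > 0 \<Longrightarrow> prod_zmod_const I q c \<in> carrier (prod_zmod I q)"
  by (simp add: prod_zmod_carrier_iff prod_zmod_const_def)

lemma abelian_monoid_prod_zmod:
  assumes "q > 0"
  shows "abelian_monoid (prod_zmod I q)"
  by unfold_locales (use assms in \<open>auto simp: prod_zmod_carrier_iff prod_zmod_simps fun_eq_iff
      mod_add_left_eq mod_add_right_eq ac_simps\<close>)

lemma comm_monoid_prod_zmod:
  assumes "q > 1"
  shows "comm_monoid (prod_zmod I q)"
  by unfold_locales (use assms in \<open>auto simp: prod_zmod_carrier_iff prod_zmod_simps fun_eq_iff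
      mod_mult_left_eq mod_mult_right_eq ac_simps\<close>)

lemma prod_zmod_finsum_apply:
  assumes "q > 0" "finite S" "f \<in> S \<rightarrow> carrier (prod_zmod I q)" "i \<in> I"
  shows "finsum (prod_zmod I q) f S i = (\<Sum>j\<in>S. f j i) mod q"
proof -
  interpret abelian_monoid "prod_zmod I q"
    using abelian_monoid_prod_zmod[OF assms(1)] .
  show ?thesis
    using assms(2,3) by (induction S rule: finite_induct)
      (use assms(4) in \<open>simp_all add: prod_zmod_simps mod_add_right_eq\<close>)
qed

lemma prod_zmod_finsum_mult_apply:
  assumes "q > 0" "finite S" "a \<in> S \<rightarrow> carrier (prod_zmod I q)" "b \<in> S \<rightarrow> carrier (prod_zmod I q)"
    and "i \<in> I"
  shows "(\<Oplus>\<^bsub>prod_zmod I q\<^esub>j\<in>S. a j \<otimes>\<^bsub>prod_zmod I q\<^esub> b j) i = (\<Sum>j\<in>S. a j i * b j i) mod q"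
proof -
  have "(\<lambda>j. a j \<otimes>\<^bsub>prod_zmod I q\<^esub> b j) \<in> S \<rightarrow> carrier (prod_zmod I q)"
    using prod_zmod_mult_closed[OF assms(1)] by blast
  then show ?thesis
    using assms by (simp add: prod_zmod_finsum_apply prod_zmod_simps mod_sum_eq)
qed

lemma prod_zmod_finsum_const_mult_apply:
  assumes "q > 0" "finite S" "x \<in> S \<rightarrow> carrier (prod_zmod I q)" "i \<in> I"
  shows "(\<Oplus>\<^bsub>prod_zmod I q\<^esub>j\<in>S. prod_zmod_const I q (c j) \<otimes>\<^bsub>prod_zmod I q\<^esub> x j) i
           = (\<Sum>j\<in>S. c j * x j i) mod q"
proof -
  have "(\<Oplus>\<^bsub>prod_zmod I q\<^esub>j\<in>S. prod_zmod_const I q (c j) \<otimes>\<^bsub>prod_zmod I q\<^esub> x j) i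
      = (\<Sum>j\<in>S. (c j mod q) * x j i) mod q"
    using assms prod_zmod_const_closed[OF assms(1)]
    by (subst prod_zmod_finsum_mult_apply) (auto simp: prod_zmod_const_def)
  also have "\<dots> = (\<Sum>j\<in>S. c j * x j i) mod q"
    by (subst (1 2) mod_sum_eq[symmetric]) (simp add: mod_mult_left_eq)
  finally show ?thesis .
qed

lemma prod_zmod_finsum_mult_const_apply:
  assumes "q > 0" "finite S" "a \<in> S \<rightarrow> carrier (prod_zmod I q)" "i \<in> I"
  shows "(\<Oplus>\<^bsub>prod_zmod I q\<^esub>j\<in>S. a j \<otimes>\<^bsub>prod_zmod I q\<^esub> prod_zmod_const I q (c j)) i
           = (\<Sum>j\<in>S. a j i * c j) mod q"
proof -
  have "(\<Oplus>\<^bsub>prod_zmod I q\<^esub>j\<in>S. a j \<otimes>\<^bsub>prod_zmod I q\<^esub> prod_zmod_const I q (c j)) i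
      = (\<Sum>j\<in>S. a j i * (c j mod q)) mod q"
    using assms prod_zmod_const_closed[OF assms(1)]
    by (subst prod_zmod_finsum_mult_apply) (auto simp: prod_zmod_const_def)
  also have "\<dots> = (\<Sum>j\<in>S. a j i * c j) mod q"
    by (subst (1 2) mod_sum_eq[symmetric]) (simp add: mod_mult_right_eq)
  finally show ?thesis .
qed

lemma prod_zmod_mult_finsum_const_apply:
  assumes "q > 0" "finite S" "d \<in> carrier (prod_zmod I q)" "i \<in> I"
  shows "(d \<otimes>\<^bsub>prod_zmod I q\<^esub> (\<Oplus>\<^bsub>prod_zmod I q\<^esub>j\<in>S. prod_zmod_const I q (c j))) i
           = (d i * (\<Sum>j\<in>S. c j)) mod q"
proof -
  have "(\<Oplus>\<^bsub>prod_zmod I q\<^esub>j\<in>S. prod_zmod_const I q (c j)) i = (\<Sum>j\<in>S. c j mod q) mod q"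
    using assms prod_zmod_const_closed[OF assms(1)]
    by (subst prod_zmod_finsum_apply) (auto simp: prod_zmod_const_def)
  then show ?thesis
    using assms(4) by (simp add: prod_zmod_simps mod_sum_eq mod_mult_right_eq)
qed

lemma prod_zmod_mult_eq_zeroI:
  fixes a b q :: int
  assumes "\<forall>i\<in>I. a dvd x i" "\<forall>i\<in>I. b dvd y i" "q dvd a * b"
  shows "x \<otimes>\<^bsub>prod_zmod I q\<^esub> y = \<zero>\<^bsub>prod_zmod I q\<^esub>"
proof -
  have "q dvd x i * y i" if "i \<in> I" for i
    using assms(1,2) that dvd_trans[OF assms(3) mult_dvd_mono] by blast
  then show ?thesis
    by (auto simp: prod_zmod_simps fun_eq_iff dvd_eq_mod_eq_0)
qed

lemma prod_zmod_annihilated_ideal_finite: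
  fixes d :: "nat \<Rightarrow> 'i \<Rightarrow> int"
  assumes "q > 1" "d 1 \<in> carrier (prod_zmod I q)" "d 0 \<otimes>\<^bsub>prod_zmod I q\<^esub> d 1 = \<zero>\<^bsub>prod_zmod I q\<^esub>"
  shows "finite {d 0 \<otimes>\<^bsub>prod_zmod I q\<^esub> ((\<Otimes>\<^bsub>prod_zmod I q\<^esub>t\<in>{1..1}. d t) [^]\<^bsub>prod_zmod I q\<^esub> (1::nat))
                   \<otimes>\<^bsub>prod_zmod I q\<^esub> y | y. y \<in> carrier (prod_zmod I q)}"
proof -
  interpret comm_monoid "prod_zmod I q"
    using comm_monoid_prod_zmod[OF assms(1)] .
  have power: "(\<Otimes>\<^bsub>prod_zmod I q\<^esub>t\<in>{1..1}. d t) [^]\<^bsub>prod_zmod I q\<^esub> (1::nat) = d 1"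
    using assms(2) by (simp add: finprod_insert)
  have "d 0 \<otimes>\<^bsub>prod_zmod I q\<^esub> ((\<Otimes>\<^bsub>prod_zmod I q\<^esub>t\<in>{1..1}. d t) [^]\<^bsub>prod_zmod I q\<^esub> (1::nat))
               \<otimes>\<^bsub>prod_zmod I q\<^esub> y = \<zero>\<^bsub>prod_zmod I q\<^esub>" for y
    unfolding power assms(3) by (simp add: prod_zmod_simps fun_eq_iff)
  then show ?thesis
    by (auto intro: finite_subset[of _ "{\<zero>\<^bsub>prod_zmod I q\<^esub>}"])
qed

definition torsion_schur_matrix :: "int \<Rightarrow> nat \<Rightarrow> nat \<Rightarrow> int" where
  "torsion_schur_matrix P r j = [[P, 0, 0], [0, P, 0], [1, 1, -1]] ! r ! j"

lemma lessThan_3: "{..<3::nat} = {0, 1, 2}"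
  by auto

lemma torsion_modulus_bounds:
  fixes N P :: int
  assumes "N \<ge> 1" "P \<ge> 2"
  shows "0 < N * P" "N * P < N * P^2"
proof -
  have "N * P * 1 < N * P * P"
    using assms by (intro mult_strict_left_mono) auto
  then show "0 < N * P" "N * P < N * P^2"
    using assms by (auto simp: power2_eq_square)
qed

lemma dvd_cancel_factor:
  fixes N P x :: int
  assumes "P \<noteq> 0" "N * P^2 dvd x * P"
  shows "N * P dvd x"
  using assms by (simp add: power2_eq_square mult.assoc[symmetric])

lemma torsion_schur_first_block_misses_one:
  fixes P d q :: int
  assumes "J \<subseteq> {..<3}" "J \<noteq> {}" "q dvd d * (\<Sum>j\<in>J. torsion_schur_matrix P 2 j)" "\<not> q dvd d"
  obtains js where "js < 3" "J = {..<3} - {js}"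
proof -
  have "J \<in> Pow {0, 1, 2}"
    using assms(1) by (simp add: lessThan_3)
  then show thesis
    using assms(2-4) that[of 0] that[of 1] that[of 2]
    by (simp add: Pow_insert lessThan_3 insert_commute torsion_schur_matrix_def)
      (elim disjE; simp add: insert_Diff_if)
qed

lemma torsion_schur_first_block_multiple:
  fixes N P d :: int
  assumes "P \<noteq> 0" "js < 3"
    and "\<forall>r<3. N * P^2 dvd d * (\<Sum>j\<in>{..<3} - {js}. torsion_schur_matrix P r j)"
  shows "N * P dvd d"
proof (rule dvd_cancel_factor[OF assms(1)])
  have "js = 0 \<or> js = 1 \<or> js = 2"
    using assms(2) by auto
  then show "N * P^2 dvd d * P"
    using assms(3)[rule_format, of 0] assms(3)[rule_format, of 1]
    by (auto simp: lessThan_3 torsion_schur_matrix_def insert_Diff_if)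
qed

lemma torsion_schur_second_block_multiple:
  fixes N P d :: int
  assumes "P \<noteq> 0" "js < 3"
    and "\<forall>r<3. N * P^2 dvd d * torsion_schur_matrix P r js
                          - (\<Sum>j\<in>{..<3} - {js}. a j * torsion_schur_matrix P r j)"
  shows "N * P dvd d"
proof -
  note row = assms(3)[rule_format]
  consider "js = 0" | "js = 1" | "js = 2"
    using assms(2) by linarith
  then show ?thesis
  proof cases
    case 1
    then show ?thesis
      using row[of 0] dvd_cancel_factor[OF assms(1)]
      by (simp add: lessThan_3 torsion_schur_matrix_def insert_Diff_if)
  next
    case 2
    then show ?thesis
      using row[of 1] dvd_cancel_factor[OF assms(1)]
      by (simp add: lessThan_3 torsion_schur_matrix_def insert_Diff_if)
  next
    case 3
    have "N * P^2 dvd a 0 * P" "N * P^2 dvd a 1 * P" "N * P^2 dvd - d - (a 0 + a 1)"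
      using 3 row[of 0] row[of 1] row[of 2]
      by (simp_all add: lessThan_3 torsion_schur_matrix_def insert_Diff_if)
    then have "N * P dvd a 0" "N * P dvd a 1" "N * P dvd - d - (a 0 + a 1)"
      using dvd_cancel_factor[OF assms(1)] dvd_mult_left[of "N * P" P]
      by (auto simp: power2_eq_square mult.assoc[symmetric] intro: dvd_trans)
    then have "N * P dvd (- d - (a 0 + a 1)) + a 0 + a 1"
      by (intro dvd_add)
    then show ?thesis
      by simp
  qed
qed

lemma torsion_schur_solves:
  assumes "q > 0" "\<forall>j<3. x j \<in> carrier (prod_zmod I q)" "row < 3"
    and "\<And>i. i \<in> I \<Longrightarrow> x 0 i + x 1 i - x 2 i = 0 \<and> P * x 0 i mod q = 0 \<and> P * x 1 i mod q = 0"
  shows "(\<Oplus>\<^bsub>prod_zmod I q\<^esub>j\<in>{..<3}. prod_zmod_const I q (torsion_schur_matrix P row j)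
            \<otimes>\<^bsub>prod_zmod I q\<^esub> x j) = \<zero>\<^bsub>prod_zmod I q\<^esub>"
    (is "?lhs = _")
proof (rule prod_zmod_eqI[of _ I q])
  interpret abelian_monoid "prod_zmod I q"
    using abelian_monoid_prod_zmod[OF assms(1)] .
  show "?lhs \<in> carrier (prod_zmod I q)"
    using assms(1) by (intro finsum_closed Pi_I prod_zmod_mult_closed)
  show "\<zero>\<^bsub>prod_zmod I q\<^esub> \<in> carrier (prod_zmod I q)"
    by simp
  fix i assume "i \<in> I"
  have "?lhs i = (\<Sum>j\<in>{..<3}. torsion_schur_matrix P row j * x j i) mod q"
    using assms(1,2) \<open>i \<in> I\<close> by (intro prod_zmod_finsum_const_mult_apply) auto
  also have "\<dots> = 0"
  proof -
    have "row = 0 \<or> row = 1 \<or> row = 2"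
      using assms(3) by linarith
    then show ?thesis
      using assms(4)[OF \<open>i \<in> I\<close>]
      by (elim disjE) (simp_all add: lessThan_3 torsion_schur_matrix_def add_diff_eq)
  qed
  finally show "?lhs i = \<zero>\<^bsub>prod_zmod I q\<^esub> i"
    by (simp add: prod_zmod_simps)
qed

lemma partition_regular_torsion_schur:
  fixes N P q :: int
  assumes "N \<ge> 1" "P \<ge> 2" "q = N * P^2" "infinite I"
  shows "partition_regular (prod_zmod I q) 3 3 (\<lambda>r j. prod_zmod_const I q (torsion_schur_matrix P r j))"
  unfolding partition_regular_def
proof (intro allI impI)
  fix r :: nat and \<chi> assume \<chi>: "\<chi> \<in> carrier (prod_zmod I q) \<rightarrow> {1..r}"
  have NP_bounds: "0 < N * P" "N * P < q"
    using torsion_modulus_bounds[OF assms(1,2)] assms(3) by auto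
  define NP_indicator where "NP_indicator A = (\<lambda>i. if i \<in> A then N * P else 0)" for A :: "'a set"
  have NP_indicator_closed: "NP_indicator A \<in> carrier (prod_zmod I q)" if "A \<subseteq> I" for A
    using that NP_bounds by (auto simp: NP_indicator_def prod_zmod_carrier_iff)
  obtain A B where AB: "A \<subseteq> I" "B \<subseteq> I" "A \<noteq> {}" "A \<inter> B = {}"
    and colour: "\<chi> (NP_indicator A) = \<chi> (NP_indicator (A \<union> B))"
      "\<chi> (NP_indicator B) = \<chi> (NP_indicator (A \<union> B))"
  proof (rule finite_union_Schur[OF assms(4), of "\<lambda>A. \<chi> (NP_indicator A)" "Suc r"])
    show "\<chi> (NP_indicator A) < Suc r" if "A \<subseteq> I" for A
      using \<chi> NP_indicator_closed[OF that] by force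
  qed
  define x where "x j = [NP_indicator A, NP_indicator B, NP_indicator (A \<union> B)] ! j" for j
  have x_closed: "\<forall>j<3. x j \<in> carrier (prod_zmod I q)"
    using NP_indicator_closed AB by (auto simp: x_def less_Suc_eq numeral_3_eq_3)
  have "P * (N * P) = q"
    by (simp add: assms(3) power2_eq_square)
  then have coords: "x 0 i + x 1 i - x 2 i = 0 \<and> P * x 0 i mod q = 0 \<and> P * x 1 i mod q = 0" for i
    using AB(4) by (auto simp: x_def NP_indicator_def)
  have solves: "\<forall>row<3. (\<Oplus>\<^bsub>prod_zmod I q\<^esub>j\<in>{..<3}. prod_zmod_const I q (torsion_schur_matrix P row j)
                      \<otimes>\<^bsub>prod_zmod I q\<^esub> x j) = \<zero>\<^bsub>prod_zmod I q\<^esub>"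
    by (intro allI impI torsion_schur_solves[OF _ x_closed] coords) (use NP_bounds in linarith)
  have "x 0 \<noteq> \<zero>\<^bsub>prod_zmod I q\<^esub>"
    using AB(3) NP_bounds by (auto simp: x_def NP_indicator_def prod_zmod_simps fun_eq_iff)
  then have nonzero: "\<exists>j<3. x j \<noteq> \<zero>\<^bsub>prod_zmod I q\<^esub>"
    by auto
  have monochromatic: "\<exists>c. \<forall>j<3. \<chi> (x j) = c"
    using colour by (auto simp: x_def less_Suc_eq numeral_3_eq_3)
  show "\<exists>x. (\<forall>j<3. x j \<in> carrier (prod_zmod I q)) \<and> (\<exists>j<3. x j \<noteq> \<zero>\<^bsub>prod_zmod I q\<^esub>) \<and>
      (\<forall>row<3. (\<Oplus>\<^bsub>prod_zmod I q\<^esub>j\<in>{..<3}. prod_zmod_const I q (torsion_schur_matrix P row j)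
                  \<otimes>\<^bsub>prod_zmod I q\<^esub> x j) = \<zero>\<^bsub>prod_zmod I q\<^esub>) \<and>
      (\<exists>c. \<forall>j<3. \<chi> (x j) = c)"
    by (intro exI[of _ x] conjI x_closed nonzero solves monochromatic)
qed

lemma gcc_first_block_torsion_schur:
  fixes N P q :: int
  assumes "N \<ge> 1" "P \<ge> 2" "q = N * P^2"
    and "d \<in> carrier (prod_zmod I q)" "d \<noteq> \<zero>\<^bsub>prod_zmod I q\<^esub>" "J \<subseteq> {..<3}" "J \<noteq> {}"
    and "\<forall>r<3. d \<otimes>\<^bsub>prod_zmod I q\<^esub> (\<Oplus>\<^bsub>prod_zmod I q\<^esub>j\<in>J. prod_zmod_const I q (torsion_schur_matrix P r j))
               = \<zero>\<^bsub>prod_zmod I q\<^esub>"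
  obtains js where "js < 3" "J = {..<3} - {js}" "\<forall>i\<in>I. N * P dvd d i"
proof -
  have "0 < q" "P \<noteq> 0"
    using torsion_modulus_bounds[OF assms(1,2)] assms(2,3) by auto
  have coord: "q dvd d i * (\<Sum>j\<in>J. torsion_schur_matrix P r j)" if "i \<in> I" "r < 3" for i r
  proof -
    have "(d \<otimes>\<^bsub>prod_zmod I q\<^esub> (\<Oplus>\<^bsub>prod_zmod I q\<^esub>j\<in>J. prod_zmod_const I q (torsion_schur_matrix P r j))) i = 0"
      using assms(8) that by (simp add: prod_zmod_simps)
    then show ?thesis
      using \<open>0 < q\<close> assms(4,6) that
      by (simp add: prod_zmod_mult_finsum_const_apply finite_subset dvd_eq_mod_eq_0)
  qed
  obtain i0 where "d i0 \<noteq> 0"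
    using assms(5) by (auto simp: prod_zmod_simps fun_eq_iff)
  moreover have "i0 \<in> I"
    using assms(4) \<open>d i0 \<noteq> 0\<close> unfolding prod_zmod_carrier_iff by blast
  ultimately have "0 < d i0" "d i0 < q"
    using assms(4) unfolding prod_zmod_carrier_iff by force+
  then have "\<not> q dvd d i0"
    by (simp add: zdvd_not_zless)
  then obtain js where js: "js < 3" "J = {..<3} - {js}"
    using torsion_schur_first_block_misses_one[OF assms(6,7) coord[OF \<open>i0 \<in> I\<close>]] by auto
  moreover have "\<forall>i\<in>I. N * P dvd d i"
    using torsion_schur_first_block_multiple[OF \<open>P \<noteq> 0\<close> js(1)] coord js(2) assms(3) by simp
  ultimately show thesis
    using that by blast
qed

lemma gcc_second_block_torsion_schur:
  fixes N P q :: int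
  assumes "N \<ge> 1" "P \<ge> 2" "q = N * P^2" "js < 3"
    and "d \<in> carrier (prod_zmod I q)" "\<forall>j\<in>{..<3} - {js}. a j \<in> carrier (prod_zmod I q)"
    and "\<forall>r<3. d \<otimes>\<^bsub>prod_zmod I q\<^esub> (\<Oplus>\<^bsub>prod_zmod I q\<^esub>j\<in>{js}. prod_zmod_const I q (torsion_schur_matrix P r j))
               = (\<Oplus>\<^bsub>prod_zmod I q\<^esub>j\<in>{..<3} - {js}.
                    a j \<otimes>\<^bsub>prod_zmod I q\<^esub> prod_zmod_const I q (torsion_schur_matrix P r j))"
    and "i \<in> I"
  shows "N * P dvd d i"
proof (rule torsion_schur_second_block_multiple[where a = "\<lambda>j. a j i"])
  show "P \<noteq> 0" "js < 3"
    using assms(2,4) by auto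
  have "0 < q"
    using torsion_modulus_bounds[OF assms(1,2)] assms(3) by auto
  show "\<forall>r<3. N * P^2 dvd d i * torsion_schur_matrix P r js
                          - (\<Sum>j\<in>{..<3} - {js}. a j i * torsion_schur_matrix P r j)"
  proof (intro allI impI)
    fix r :: nat assume "r < 3"
    then have "(d i * torsion_schur_matrix P r js) mod q
             = (\<Sum>j\<in>{..<3} - {js}. a j i * torsion_schur_matrix P r j) mod q"
      using assms(7) \<open>0 < q\<close> assms(5,6,8)
        prod_zmod_mult_finsum_const_apply[of q "{js}" d I i "torsion_schur_matrix P r"]
        prod_zmod_finsum_mult_const_apply[of q "{..<3} - {js}" a I i "torsion_schur_matrix P r"]
      by simp
    then show "N * P^2 dvd d i * torsion_schur_matrix P r js
                           - (\<Sum>j\<in>{..<3} - {js}. a j i * torsion_schur_matrix P r j)"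
      by (simp add: mod_eq_dvd_iff assms(3))
  qed
qed

lemma not_gcc_torsion_schur:
  fixes N P q :: int and I :: "'i set"
  assumes "N \<ge> 1" "P \<ge> 2" "q = N * P^2"
  shows "\<not> generalised_columns_condition (prod_zmod I q) 3 3
            (\<lambda>r j. prod_zmod_const I q (torsion_schur_matrix P r j))"
    (is "\<not> generalised_columns_condition ?R 3 3 ?A")
proof
  have "1 < q"
    using torsion_modulus_bounds[OF assms(1,2)] assms(3) by auto
  assume "generalised_columns_condition ?R 3 3 ?A"
  then obtain m :: nat and blk :: "nat \<Rightarrow> nat" and d :: "nat \<Rightarrow> 'i \<Rightarrow> int" where
    blk_le: "\<forall>j<3. blk j \<le> m" and blk_onto: "\<forall>t\<le>m. \<exists>j<3. blk j = t"
    and d_nz: "\<forall>t\<le>m. d t \<in> carrier ?R - {\<zero>\<^bsub>?R\<^esub>}"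
    and first: "\<forall>r<3. d 0 \<otimes>\<^bsub>?R\<^esub> (\<Oplus>\<^bsub>?R\<^esub>j\<in>{j. j < 3 \<and> blk j = 0}. ?A r j) = \<zero>\<^bsub>?R\<^esub>"
    and later: "\<forall>t. 1 \<le> t \<and> t \<le> m \<longrightarrow>
          (\<exists>a. (\<forall>j. j < 3 \<and> blk j < t \<longrightarrow> a j \<in> carrier ?R) \<and>
               (\<forall>r<3. d t \<otimes>\<^bsub>?R\<^esub> (\<Oplus>\<^bsub>?R\<^esub>j\<in>{j. j < 3 \<and> blk j = t}. ?A r j)
                     = (\<Oplus>\<^bsub>?R\<^esub>j\<in>{j. j < 3 \<and> blk j < t}. a j \<otimes>\<^bsub>?R\<^esub> ?A r j)))"
    and ideal: "m > 0 \<longrightarrow> (\<forall>n::nat. infinite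
          {d 0 \<otimes>\<^bsub>?R\<^esub> ((\<Otimes>\<^bsub>?R\<^esub>t\<in>{1..m}. d t) [^]\<^bsub>?R\<^esub> n) \<otimes>\<^bsub>?R\<^esub> y | y. y \<in> carrier ?R})"
    unfolding generalised_columns_condition_def by (elim exE conjE) (rule that; assumption)
  have "{j. j < 3 \<and> blk j = 0} \<subseteq> {..<3}" "{j. j < 3 \<and> blk j = 0} \<noteq> {}"
    using blk_onto[rule_format, of 0] by auto
  then obtain js where js: "js < 3" "{j. j < 3 \<and> blk j = 0} = {..<3} - {js}"
    and d0_multiple: "\<forall>i\<in>I. N * P dvd d 0 i"
    using gcc_first_block_torsion_schur[OF assms _ _ _ _ first] d_nz by blast
  have "m = 1" and block1: "{j. j < 3 \<and> blk j = 1} = {js}"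
    using block_map_two_blocks[OF blk_le blk_onto js] by simp_all
  have lower: "{j. j < 3 \<and> blk j < 1} = {..<3} - {js}"
    using js(2) by auto
  obtain a where a_closed: "\<forall>j. j < 3 \<and> blk j < 1 \<longrightarrow> a j \<in> carrier ?R"
    and a_eq: "\<forall>r<3. d 1 \<otimes>\<^bsub>?R\<^esub> (\<Oplus>\<^bsub>?R\<^esub>j\<in>{js}. ?A r j)
                     = (\<Oplus>\<^bsub>?R\<^esub>j\<in>{..<3} - {js}. a j \<otimes>\<^bsub>?R\<^esub> ?A r j)"
    using later[rule_format, of 1] \<open>m = 1\<close> unfolding block1 lower by auto
  have d1: "d 1 \<in> carrier ?R"
    using d_nz \<open>m = 1\<close> by auto
  have "\<forall>j\<in>{..<3} - {js}. a j \<in> carrier ?R"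
    using a_closed lower by blast
  then have d1_multiple: "\<forall>i\<in>I. N * P dvd d 1 i"
    using gcc_second_block_torsion_schur[OF assms js(1) d1 _ a_eq] by blast
  have "q dvd (N * P) * (N * P)"
    using dvd_triv_left[of "N * P^2" N] by (simp add: assms(3) power2_eq_square ac_simps)
  then have "d 0 \<otimes>\<^bsub>?R\<^esub> d 1 = \<zero>\<^bsub>?R\<^esub>"
    using d0_multiple d1_multiple by (rule prod_zmod_mult_eq_zeroI[rotated 2])
  then have "finite {d 0 \<otimes>\<^bsub>?R\<^esub> ((\<Otimes>\<^bsub>?R\<^esub>t\<in>{1..m}. d t) [^]\<^bsub>?R\<^esub> (1::nat)) \<otimes>\<^bsub>?R\<^esub> y
                 | y. y \<in> carrier ?R}"
    unfolding \<open>m = 1\<close> by (rule prod_zmod_annihilated_ideal_finite[where d = d, OF \<open>1 < q\<close> d1])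
  moreover have "0 < m"
    using \<open>m = 1\<close> by simp
  ultimately show False
    using ideal by blast
qed

theorem corollary4p7:
  fixes n p :: nat and I :: "'i set"
  assumes "n > 0" and "prime p" and "infinite I"
  shows "\<exists>A. matrix_over (prod_zmod I (int (n * p^2))) 3 3 A \<and>
             partition_regular (prod_zmod I (int (n * p^2))) 3 3 A \<and>
             \<not> generalised_columns_condition (prod_zmod I (int (n * p^2))) 3 3 A"
proof -
  have N: "int n \<ge> 1" and P: "int p \<ge> 2"
    using assms(1) prime_ge_2_nat[OF assms(2)] by auto
  have q: "int (n * p^2) = int n * (int p)^2"
    by simp
  then have "int (n * p^2) > 0"
    using torsion_modulus_bounds[OF N P] by linarith
  then show ?thesis
    using prod_zmod_const_closed partition_regular_torsion_schur[OF N P q assms(3)]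
      not_gcc_torsion_schur[OF N P q]
    by (intro exI[of _ "\<lambda>r j. prod_zmod_const I (int (n * p^2)) (torsion_schur_matrix (int p) r j)"])
      (auto simp: matrix_over_def)
qed

end
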